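(* Let $\mathcal C,\mathcal D\subseteq\{0,1\}^n$ be neural codes and $q:\mathcal C\to\mathcal D$ a code map, with pullback ring homomorphism $\phi_q:R_\mathcal D\to R_\mathcal C$, $\phi_q(f)=f\circ q$. Then $\phi_q$ is an $R[n]$-module homomorphism if and only if $q$ is an inclusion map, i.e. $q(c)=c$ for all $c\in\mathcal C$ (so $\mathcal C\subseteq\mathcal D$); and $\phi_q$ is an $R[n]$-module isomorphism if and only if $\mathcal C=\mathcal D$ and $q$ is the identity.
   Context: For a code $\mathcal C\subseteq\{0,1\}^n$, $R_\mathcal C$ is the ring of all functions $\mathcal C\to\mathbb F_2$ (equivalently $\mathbb F_2[x_1,\dots,x_n]$ modulo the ideal of polynomials vanishing on $\mathcal C$). $R[n]=\mathbb F_2[x_1,\dots,x_n]/\langle x_i^2-x_i: i\in[n]\rangle$, and $R_\mathcal C$ is an $R[n]$-module via $(r\cdot f)(c)=r(c)f(c)$ for $c\in\mathcal C$. A code map is any function $q:\mathcal C\to\mathcal D$. *)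

theory Defs
  imports Main "HOL-Library.Z2"
begin

(* Codewords of length n: bool lists of length n (True = 1).
   F_2 is the field 'bit' from HOL-Library.Z2. *)

definition neural_code :: "nat \<Rightarrow> bool list set \<Rightarrow> bool" where
  "neural_code n C \<longleftrightarrow> (\<forall>c\<in>C. length c = n)"

(* R[n]: Boolean functions {0,1}^n -> F_2 (canonically F_2[x]/<x_i^2-x_i>),
   represented as functions vanishing outside {0,1}^n. *)
definition Rn :: "nat \<Rightarrow> (bool list \<Rightarrow> bit) set" where
  "Rn n = {r. \<forall>x. length x \<noteq> n \<longrightarrow> r x = 0}"

(* R_C: all functions C -> F_2, represented as functions vanishing outside C *)
definition RC :: "bool list set \<Rightarrow> (bool list \<Rightarrow> bit) set" where
  "RC C = {f. \<forall>x. x \<notin> C \<longrightarrow> f x = 0}"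

definition act :: "(bool list \<Rightarrow> bit) \<Rightarrow> (bool list \<Rightarrow> bit) \<Rightarrow> (bool list \<Rightarrow> bit)" where
  "act r f = (\<lambda>c. r c * f c)"

definition code_map :: "bool list set \<Rightarrow> bool list set \<Rightarrow> (bool list \<Rightarrow> bool list) \<Rightarrow> bool" where
  "code_map C D q \<longleftrightarrow> (\<forall>c\<in>C. q c \<in> D)"

definition pullback :: "bool list set \<Rightarrow> (bool list \<Rightarrow> bool list) \<Rightarrow> (bool list \<Rightarrow> bit) \<Rightarrow> (bool list \<Rightarrow> bit)" where
  "pullback C q f = (\<lambda>c. if c \<in> C then f (q c) else 0)"

definition Rn_module_hom :: "nat \<Rightarrow> bool list set \<Rightarrow> bool list set \<Rightarrow> ((bool list \<Rightarrow> bit) \<Rightarrow> (bool list \<Rightarrow> bit)) \<Rightarrow> bool" where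
  "Rn_module_hom n D C \<phi> \<longleftrightarrow>
     (\<forall>f\<in>RC D. \<phi> f \<in> RC C) \<and>
     (\<forall>f\<in>RC D. \<forall>g\<in>RC D. \<phi> (\<lambda>x. f x + g x) = (\<lambda>x. \<phi> f x + \<phi> g x)) \<and>
     (\<forall>r\<in>Rn n. \<forall>f\<in>RC D. \<phi> (act r f) = act r (\<phi> f))"

definition Rn_module_iso :: "nat \<Rightarrow> bool list set \<Rightarrow> bool list set \<Rightarrow> ((bool list \<Rightarrow> bit) \<Rightarrow> (bool list \<Rightarrow> bit)) \<Rightarrow> bool" where
  "Rn_module_iso n D C \<phi> \<longleftrightarrow> Rn_module_hom n D C \<phi> \<and> bij_betw \<phi> (RC D) (RC C)"

end

theory Submission
  imports Defs
begin

text \<open>Test the R[n]-linearity of the pullback against e, the indicator of the codeword q c: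
  ((e \<cdot> e) \<circ> q)(c) = e(q c) = 1, while (e \<cdot> (e \<circ> q))(c) = e(c) e(q c) = 0 unless q c = c.
  Conversely, when q is the inclusion the pullback is restriction to C, which is R[n]-linear.
  An isomorphism is injective, and restriction kills the indicator of any word of D outside C,
  so then D \<subseteq> C.\<close>

definition point_indicator :: "bool list \<Rightarrow> bool list \<Rightarrow> bit" where
  "point_indicator a = (\<lambda>x. if x = a then 1 else 0)"

lemma point_indicator_in_RC: "a \<in> C \<Longrightarrow> point_indicator a \<in> RC C"
  by (auto simp: RC_def point_indicator_def)

lemma point_indicator_in_Rn: "length a = n \<Longrightarrow> point_indicator a \<in> Rn n"
  by (auto simp: Rn_def point_indicator_def)

lemma pullback_inclusion:
  assumes "\<forall>c\<in>C. q c = c"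
  shows "pullback C q f = (\<lambda>c. if c \<in> C then f c else 0)"
  using assms by (auto simp: pullback_def)

lemma pullback_inclusion_Rn_module_hom:
  assumes "\<forall>c\<in>C. q c = c"
  shows "Rn_module_hom n D C (pullback C q)"
  unfolding Rn_module_hom_def pullback_inclusion[OF assms] by (auto simp: RC_def act_def)

lemma Rn_module_hom_pullback_imp_inclusion:
  assumes "neural_code n D" and "code_map C D q"
    and hom: "Rn_module_hom n D C (pullback C q)" and "c \<in> C"
  shows "q c = c"
proof (rule ccontr)
  assume "q c \<noteq> c"
  let ?e = "point_indicator (q c)"
  have "q c \<in> D" using assms(2,4) by (simp add: code_map_def)
  then have "?e \<in> RC D" "?e \<in> Rn n"
    using assms(1) by (auto intro: point_indicator_in_RC point_indicator_in_Rn simp: neural_code_def)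
  then have "pullback C q (act ?e ?e) c = act ?e (pullback C q ?e) c"
    using hom by (simp add: Rn_module_hom_def)
  with \<open>c \<in> C\<close> \<open>q c \<noteq> c\<close> show False
    by (simp add: pullback_def act_def point_indicator_def)
qed

lemma pullback_Rn_module_hom_iff:
  assumes "neural_code n D" and "code_map C D q"
  shows "Rn_module_hom n D C (pullback C q) \<longleftrightarrow> (\<forall>c\<in>C. q c = c)"
  using Rn_module_hom_pullback_imp_inclusion[OF assms] pullback_inclusion_Rn_module_hom
  by blast

lemma inj_on_pullback_inclusion_imp_subset:
  assumes "\<forall>c\<in>C. q c = c" and "inj_on (pullback C q) (RC D)"
  shows "D \<subseteq> C"
proof
  fix d assume "d \<in> D"
  show "d \<in> C"
  proof (rule ccontr)
    assume "d \<notin> C"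
    have zero: "(\<lambda>x. 0) \<in> RC D" by (simp add: RC_def)
    have "pullback C q (point_indicator d) = pullback C q (\<lambda>x. 0)"
      using assms(1) \<open>d \<notin> C\<close> by (auto simp: pullback_def point_indicator_def)
    then have "point_indicator d = (\<lambda>x. 0)"
      using assms(2) point_indicator_in_RC[OF \<open>d \<in> D\<close>] zero by (meson inj_onD)
    then show False by (metis one_neq_zero point_indicator_def)
  qed
qed

lemma pullback_identity_bij_betw:
  assumes "\<forall>c\<in>C. q c = c"
  shows "bij_betw (pullback C q) (RC C) (RC C)"
proof -
  have "\<forall>f\<in>RC C. pullback C q f = id f"
    using assms by (auto simp: pullback_def RC_def)
  then show ?thesis using bij_betw_cong bij_betw_id by metis
qed

theorem lemma4:
  fixes n :: nat and C D :: "bool list set" and q :: "bool list \<Rightarrow> bool list"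
  assumes "neural_code n C" and "neural_code n D" and "code_map C D q"
  shows "(Rn_module_hom n D C (pullback C q) \<longleftrightarrow> (\<forall>c\<in>C. q c = c))
       \<and> (Rn_module_iso n D C (pullback C q) \<longleftrightarrow> (C = D \<and> (\<forall>c\<in>C. q c = c)))"
proof -
  have hom: "Rn_module_hom n D C (pullback C q) \<longleftrightarrow> (\<forall>c\<in>C. q c = c)"
    using pullback_Rn_module_hom_iff[OF assms(2,3)] .
  moreover have "Rn_module_iso n D C (pullback C q) \<longleftrightarrow> (C = D \<and> (\<forall>c\<in>C. q c = c))"
  proof
    assume iso: "Rn_module_iso n D C (pullback C q)"
    then have incl: "\<forall>c\<in>C. q c = c" using hom by (simp add: Rn_module_iso_def)
    then have "C \<subseteq> D" using assms(3) by (auto simp: code_map_def)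
    moreover have "D \<subseteq> C"
      using iso incl inj_on_pullback_inclusion_imp_subset
      by (auto simp: Rn_module_iso_def bij_betw_def)
    ultimately show "C = D \<and> (\<forall>c\<in>C. q c = c)" using incl by blast
  next
    assume "C = D \<and> (\<forall>c\<in>C. q c = c)"
    then show "Rn_module_iso n D C (pullback C q)"
      using hom pullback_identity_bij_betw by (auto simp: Rn_module_iso_def)
  qed
  ultimately show ?thesis by blast
qed

end
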